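(* Let $B$ be the 3-manifold that is the $T^2$-bundle over $S^1$ with monodromy $-\mathrm{id}:T^2\to T^2$ (induced by $\begin{pmatrix}-1&0\\0&-1\end{pmatrix}$ on $\mathbb{R}^2/\mathbb{Z}^2$). Then $B$ smoothly embeds in $S^4$. *)

theory Defs
  imports "HOL-Analysis.Analysis"
begin

coinductive smooth_map :: "('a::euclidean_space \<Rightarrow> 'b::real_normed_vector) \<Rightarrow> bool" where
  "(\<forall>x. f differentiable (at x)) \<Longrightarrow>
   (\<forall>i\<in>Basis. smooth_map (\<lambda>x. frechet_derivative f (at x) i)) \<Longrightarrow> smooth_map f"

text \<open>The deck group of the universal cover R^3 of the T^2-bundle over S^1 with
  monodromy -id: it is generated by (x,y,z) -> (x+1,y,z), (x,y,z) -> (x,y+1,z) and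
  (x,y,z) -> (-x,-y,z+1); its general element is
  (x,y,z) -> (e x + m, e y + n, z + k) with e = (-1)^k and k,m,n integers.\<close>
definition deck_equiv :: "real^3 \<Rightarrow> real^3 \<Rightarrow> bool" where
  "deck_equiv p q \<longleftrightarrow>
     (\<exists>k m n :: int. let e = (if even k then 1 else -1 :: real) in
        q $ 1 = e * p $ 1 + of_int m \<and>
        q $ 2 = e * p $ 2 + of_int n \<and>
        q $ 3 = p $ 3 + of_int k)"

text \<open>B = R^3 / deck group. A smooth embedding of the compact manifold B into
  S^4 = sphere 0 1 in R^5 is the same as a smooth map R^3 -> R^5 with values in the
  unit sphere, whose fibres are exactly the deck orbits (so it descends to an
  injective map on B) and whose differential is injective everywhere (immersion);
  an injective immersion of a compact manifold is an embedding.\<close>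
definition smooth_embeds_B_in_S4 :: "(real^3 \<Rightarrow> real^5) \<Rightarrow> bool" where
  "smooth_embeds_B_in_S4 f \<longleftrightarrow>
     smooth_map f \<and>
     (\<forall>p. f p \<in> sphere 0 1) \<and>
     (\<forall>p q. f p = f q \<longleftrightarrow> deck_equiv p q) \<and>
     (\<forall>p. inj (frechet_derivative f (at p)))"

end

theory Submission
  imports Defs
begin

text \<open>
  View \<open>S\<^sup>4 \<subseteq> \<real>\<^sup>2 \<times> \<real>\<^sup>3\<close> as the join of \<open>S\<^sup>1\<close> and \<open>S\<^sup>2\<close>: its points are
  \<open>(cos \<beta> \<cdot> w, sin \<beta> \<cdot> u)\<close> with \<open>w \<in> S\<^sup>1\<close>, \<open>u \<in> S\<^sup>2\<close>, and this representation is unique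
  when \<open>0 < \<beta> < \<pi>/2\<close>. A torus is placed in one level by \<open>(x, y) \<mapsto> (\<beta>(y), u(x, y))\<close>, where
  \<open>u(x, y) \<in> S\<^sup>2\<close> has longitude \<open>2\<pi>x\<close> and latitude \<open>\<psi>(y)\<close>, and
  \<open>(\<beta>(y), \<psi>(y)) = (\<pi>/4, 0) + \<onehalf>(cos 2\<pi>y, sin 2\<pi>y)\<close> runs once around a small circle.
  The coordinate \<open>z\<close> turns \<open>w\<close> once around \<open>S\<^sup>1\<close> while rotating \<open>S\<^sup>2\<close> by the angle \<open>\<pi>z\<close>
  about its first axis. At \<open>z = 1\<close> this half-turn maps \<open>u(x, y)\<close> to \<open>u(-x, -y)\<close>, and \<open>\<beta>(-y) = \<beta>(y)\<close>,
  which is exactly the monodromy \<open>-id\<close>. Injectivity modulo the deck group and injectivity of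
  the differential both come down to the invertibility of plane rotations, because
  \<open>sin \<beta>\<close>, \<open>cos \<beta>\<close> and \<open>cos \<psi>\<close> never vanish.
\<close>

section \<open>Smoothness of trigonometric expressions\<close>

inductive_set trig_expr :: "(real^'n \<Rightarrow> real) set" where
  const: "(\<lambda>x. c) \<in> trig_expr"
| coord: "(\<lambda>x. x $ j) \<in> trig_expr"
| add: "f \<in> trig_expr \<Longrightarrow> g \<in> trig_expr \<Longrightarrow> (\<lambda>x. f x + g x) \<in> trig_expr"
| diff: "f \<in> trig_expr \<Longrightarrow> g \<in> trig_expr \<Longrightarrow> (\<lambda>x. f x - g x) \<in> trig_expr"
| minus: "f \<in> trig_expr \<Longrightarrow> (\<lambda>x. - f x) \<in> trig_expr"
| mult: "f \<in> trig_expr \<Longrightarrow> g \<in> trig_expr \<Longrightarrow> (\<lambda>x. f x * g x) \<in> trig_expr"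
| sin: "f \<in> trig_expr \<Longrightarrow> (\<lambda>x. sin (f x)) \<in> trig_expr"
| cos: "f \<in> trig_expr \<Longrightarrow> (\<lambda>x. cos (f x)) \<in> trig_expr"

lemma has_derivative_vec_nth [derivative_intros]:
  "((\<lambda>x. x $ i) has_derivative (\<lambda>h. h $ i)) F"
  by (rule bounded_linear_imp_has_derivative) (rule bounded_linear_vec_nth)

lemma trig_expr_has_derivative:
  assumes "f \<in> trig_expr"
  shows "\<exists>D. (\<forall>x. (f has_derivative D x) (at x)) \<and> (\<forall>v. (\<lambda>x. D x v) \<in> trig_expr)"
  using assms
proof induction
  case (const c)
  show ?case by (rule exI[of _ "\<lambda>x v. 0"]) (auto intro: trig_expr.intros)
next
  case (coord j)
  show ?case
    by (rule exI[of _ "\<lambda>x v. v $ j"])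
       (auto intro: trig_expr.intros has_derivative_vec_nth)
next
  case (add f g)
  then obtain Df Dg where "\<forall>x. (f has_derivative Df x) (at x)" "\<forall>v. (\<lambda>x. Df x v) \<in> trig_expr"
    "\<forall>x. (g has_derivative Dg x) (at x)" "\<forall>v. (\<lambda>x. Dg x v) \<in> trig_expr" by blast
  then show ?case
    by (intro exI[of _ "\<lambda>x v. Df x v + Dg x v"]) (auto intro!: trig_expr.intros derivative_eq_intros)
next
  case (diff f g)
  then obtain Df Dg where "\<forall>x. (f has_derivative Df x) (at x)" "\<forall>v. (\<lambda>x. Df x v) \<in> trig_expr"
    "\<forall>x. (g has_derivative Dg x) (at x)" "\<forall>v. (\<lambda>x. Dg x v) \<in> trig_expr" by blast
  then show ?case
    by (intro exI[of _ "\<lambda>x v. Df x v - Dg x v"]) (auto intro!: trig_expr.intros derivative_eq_intros)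
next
  case (minus f)
  then obtain Df where "\<forall>x. (f has_derivative Df x) (at x)" "\<forall>v. (\<lambda>x. Df x v) \<in> trig_expr"
    by blast
  then show ?case
    by (intro exI[of _ "\<lambda>x v. - Df x v"]) (auto intro!: trig_expr.intros derivative_eq_intros)
next
  case (mult f g)
  then obtain Df Dg where "\<forall>x. (f has_derivative Df x) (at x)" "\<forall>v. (\<lambda>x. Df x v) \<in> trig_expr"
    "\<forall>x. (g has_derivative Dg x) (at x)" "\<forall>v. (\<lambda>x. Dg x v) \<in> trig_expr" by blast
  then show ?case
    by (intro exI[of _ "\<lambda>x v. f x * Dg x v + Df x v * g x"])
       (auto intro!: trig_expr.intros derivative_eq_intros mult.hyps)
next
  case (sin f)
  then obtain Df where "\<forall>x. (f has_derivative Df x) (at x)" "\<forall>v. (\<lambda>x. Df x v) \<in> trig_expr"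
    by blast
  then show ?case
    by (intro exI[of _ "\<lambda>x v. cos (f x) * Df x v"])
       (auto intro!: trig_expr.intros derivative_eq_intros sin.hyps)
next
  case (cos f)
  then obtain Df where "\<forall>x. (f has_derivative Df x) (at x)" "\<forall>v. (\<lambda>x. Df x v) \<in> trig_expr"
    by blast
  then show ?case
    by (intro exI[of _ "\<lambda>x v. - (sin (f x) * Df x v)"])
       (auto intro!: trig_expr.intros derivative_eq_intros cos.hyps)
qed

lemma has_derivative_vecI:
  fixes f :: "'a::real_normed_vector \<Rightarrow> real^'n"
  assumes "\<And>i. ((\<lambda>x. f x $ i) has_derivative (\<lambda>h. f' h $ i)) (at a within S)"
  shows "(f has_derivative f') (at a within S)"
  using assms
  by (subst has_derivative_componentwise_within)
     (auto simp: Basis_vec_def cart_eq_inner_axis[symmetric])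

lemma smooth_map_trig_expr:
  fixes f :: "real^'m \<Rightarrow> real^'n"
  assumes "\<And>k. (\<lambda>x. f x $ k) \<in> trig_expr"
  shows "smooth_map f"
  using assms
proof (coinduction arbitrary: f)
  case (smooth_map f)
  then have "\<forall>k. \<exists>D. (\<forall>x. ((\<lambda>x. f x $ k) has_derivative D x) (at x)) \<and>
      (\<forall>v. (\<lambda>x. D x v) \<in> trig_expr)"
    using trig_expr_has_derivative by blast
  then obtain D where D: "\<And>k x. ((\<lambda>x. f x $ k) has_derivative D k x) (at x)"
     "\<And>k v. (\<lambda>x. D k x v) \<in> trig_expr"
    by metis
  have f_deriv: "(f has_derivative (\<lambda>v. \<chi> k. D k x v)) (at x)" for x
    by (rule has_derivative_vecI) (simp add: D)
  then have "frechet_derivative f (at x) = (\<lambda>v. \<chi> k. D k x v)" for x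
    by (metis frechet_derivative_at)
  then show ?case
    using f_deriv D(2) by (auto simp: differentiable_def)
qed

section \<open>Plane trigonometry\<close>

lemma cos_sin_2pi_eq_imp_int_shift:
  fixes a b :: real
  assumes "cos (2*pi*a) = cos (2*pi*b)" "sin (2*pi*a) = sin (2*pi*b)"
  shows "\<exists>n::int. b = a + of_int n"
proof -
  obtain n :: int where "2*pi*b = 2*pi*a + 2*pi * of_int n"
    using assms sin_cos_eq_iff by metis
  then have "2*pi*b = 2*pi*(a + of_int n)" by (simp add: distrib_left)
  then show ?thesis by auto
qed

lemma
  fixes x :: real
  assumes "e = 1 \<or> e = -1"
  shows cos_2pi_sign_shift: "cos (2*pi*(e*x + of_int m)) = cos (2*pi*x)"
    and sin_2pi_sign_shift: "sin (2*pi*(e*x + of_int m)) = e * sin (2*pi*x)"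
proof -
  have "2*pi*(e*x + of_int m) = e*(2*pi*x) + 2*pi * of_int m" by (simp add: algebra_simps)
  then show "cos (2*pi*(e*x + of_int m)) = cos (2*pi*x)" "sin (2*pi*(e*x + of_int m)) = e * sin (2*pi*x)"
    using assms by (auto simp: cos_add sin_add)
qed

lemma
  fixes x :: real
  shows cos_pi_int_shift: "cos (pi*(x + of_int k)) = (if even k then 1 else -1) * cos (pi*x)"
    and sin_pi_int_shift: "sin (pi*(x + of_int k)) = (if even k then 1 else -1) * sin (pi*x)"
  by (simp_all add: distrib_left cos_add sin_add)

lemma polar_eq_imp:
  fixes r r' a b :: real
  assumes "0 < r" "0 < r'" "r * cos a = r' * cos b" "r * sin a = r' * sin b"
  shows "r = r' \<and> cos a = cos b \<and> sin a = sin b"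
proof -
  have "r\<^sup>2 = (r * cos a)\<^sup>2 + (r * sin a)\<^sup>2"
    by (simp add: power_mult_distrib flip: distrib_left)
  also have "\<dots> = r'\<^sup>2"
    by (simp add: assms power_mult_distrib flip: distrib_left)
  finally have "r = r'" using assms(1,2) by (simp add: power2_eq_iff_nonneg)
  with assms show ?thesis by auto
qed

lemma rotation_cancel:
  fixes c s a b a' b' :: real
  assumes "c\<^sup>2 + s\<^sup>2 = 1" "c*a - s*b = c*a' - s*b'" "s*a + c*b = s*a' + c*b'"
  shows "a = a' \<and> b = b'"
proof -
  have "a = c*(c*a - s*b) + s*(s*a + c*b)" "b = c*(s*a + c*b) - s*(c*a - s*b)"
    using assms(1) by algebra+
  moreover have "a' = c*(c*a' - s*b') + s*(s*a' + c*b')" "b' = c*(s*a' + c*b') - s*(c*a' - s*b')"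
    using assms(1) by algebra+
  ultimately show ?thesis using assms(2,3) by metis
qed

lemma sin_cos_mult_zero:
  fixes t w :: real
  assumes "sin t * w = 0" "cos t * w = 0"
  shows "w = 0"
proof -
  have "w = sin t * (sin t * w) + cos t * (cos t * w)"
    using sin_cos_squared_add[of t] by algebra
  also have "\<dots> = 0"
    by (simp only: assms mult_zero_right add_0_right)
  finally show ?thesis .
qed

section \<open>The embedding\<close>

lemma exhaust_5:
  fixes x :: 5
  shows "x = 1 \<or> x = 2 \<or> x = 3 \<or> x = 4 \<or> x = 5"
proof (induct x)
  case (of_int z)
  then have "z = 0 \<or> z = 1 \<or> z = 2 \<or> z = 3 \<or> z = 4" by fastforce
  then show ?case by auto
qed

lemma forall_5: "(\<forall>i::5. P i) \<longleftrightarrow> P 1 \<and> P 2 \<and> P 3 \<and> P 4 \<and> P 5"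
  by (metis exhaust_5)

lemma sum_5: "sum f (UNIV::5 set) = f 1 + f 2 + f 3 + f 4 + f 5"
proof -
  have UNIV_5: "UNIV = {1, 2, 3, 4, 5::5}" using exhaust_5 by auto
  show ?thesis unfolding UNIV_5 by (simp add: ac_simps)
qed

definition join_angle :: "real \<Rightarrow> real" where
  "join_angle y = pi/4 + 1/2 * cos (2*pi*y)"

definition latitude :: "real \<Rightarrow> real" where
  "latitude y = 1/2 * sin (2*pi*y)"

lemma join_angle_bounds: "0 < join_angle y" "join_angle y < pi/2"
  using cos_ge_minus_one[of "2*pi*y"] cos_le_one[of "2*pi*y"] pi_gt3
  unfolding join_angle_def by linarith+

lemma latitude_bounds: "- (pi/2) < latitude y" "latitude y < pi/2"
  using sin_ge_minus_one[of "2*pi*y"] sin_le_one[of "2*pi*y"] pi_gt3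
  unfolding latitude_def by linarith+

lemma cos_join_angle_pos: "0 < cos (join_angle y)"
  using join_angle_bounds[of y] by (intro cos_gt_zero_pi) auto

lemma sin_join_angle_pos: "0 < sin (join_angle y)"
  using join_angle_bounds[of y] by (intro sin_gt_zero) auto

lemma cos_latitude_pos: "0 < cos (latitude y)"
  using latitude_bounds[of y] by (intro cos_gt_zero_pi) auto

definition bundle_emb :: "real^3 \<Rightarrow> real^5" where
  "bundle_emb p = (\<chi> k.
     if k = 1 then cos (join_angle (p$2)) * cos (2*pi*p$3)
     else if k = 2 then cos (join_angle (p$2)) * sin (2*pi*p$3)
     else if k = 3 then sin (join_angle (p$2)) * (cos (latitude (p$2)) * cos (2*pi*p$1))
     else if k = 4 then sin (join_angle (p$2)) *
       (cos (pi*p$3) * (cos (latitude (p$2)) * sin (2*pi*p$1)) - sin (pi*p$3) * sin (latitude (p$2)))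
     else sin (join_angle (p$2)) *
       (sin (pi*p$3) * (cos (latitude (p$2)) * sin (2*pi*p$1)) + cos (pi*p$3) * sin (latitude (p$2))))"

lemma bundle_emb_nth [simp]:
  "bundle_emb p $ 1 = cos (join_angle (p$2)) * cos (2*pi*p$3)"
  "bundle_emb p $ 2 = cos (join_angle (p$2)) * sin (2*pi*p$3)"
  "bundle_emb p $ 3 = sin (join_angle (p$2)) * (cos (latitude (p$2)) * cos (2*pi*p$1))"
  "bundle_emb p $ 4 = sin (join_angle (p$2)) *
     (cos (pi*p$3) * (cos (latitude (p$2)) * sin (2*pi*p$1)) - sin (pi*p$3) * sin (latitude (p$2)))"
  "bundle_emb p $ 5 = sin (join_angle (p$2)) *
     (sin (pi*p$3) * (cos (latitude (p$2)) * sin (2*pi*p$1)) + cos (pi*p$3) * sin (latitude (p$2)))"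
  by (simp_all add: bundle_emb_def)

lemma smooth_map_bundle_emb: "smooth_map bundle_emb"
proof (rule smooth_map_trig_expr)
  fix k :: 5
  show "(\<lambda>p. bundle_emb p $ k) \<in> trig_expr"
    using exhaust_5[of k]
    by (elim disjE; simp only: bundle_emb_nth join_angle_def latitude_def; intro trig_expr.intros)
qed

lemma norm_bundle_emb: "norm (bundle_emb p) = 1"
proof -
  have "bundle_emb p \<bullet> bundle_emb p = 1"
    unfolding inner_vec_def sum_5 inner_real_def bundle_emb_nth
    using sin_cos_squared_add[of "join_angle (p$2)"] sin_cos_squared_add[of "latitude (p$2)"]
      sin_cos_squared_add[of "2*pi*p$1"] sin_cos_squared_add[of "2*pi*p$3"]
      sin_cos_squared_add[of "pi*p$3"]
    by algebra
  then show ?thesis by (simp add: norm_eq_sqrt_inner)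
qed

lemma bundle_emb_deck_invariant:
  assumes "deck_equiv p q"
  shows "bundle_emb q = bundle_emb p"
proof -
  obtain k m n :: int and e :: real where e: "e = (if even k then 1 else -1)"
    and q: "q$1 = e * p$1 + of_int m" "q$2 = e * p$2 + of_int n" "q$3 = p$3 + of_int k"
    using assms unfolding deck_equiv_def Let_def by blast
  have sign: "e = 1 \<or> e = -1" using e by simp
  have x: "cos (2*pi*q$1) = cos (2*pi*p$1)" "sin (2*pi*q$1) = e * sin (2*pi*p$1)"
    using sign by (simp_all add: q cos_2pi_sign_shift sin_2pi_sign_shift)
  have "cos (2*pi*q$2) = cos (2*pi*p$2)" "sin (2*pi*q$2) = e * sin (2*pi*p$2)"
    using sign by (simp_all add: q cos_2pi_sign_shift sin_2pi_sign_shift)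
  then have y: "join_angle (q$2) = join_angle (p$2)" "latitude (q$2) = e * latitude (p$2)"
    by (simp_all add: join_angle_def latitude_def)
  have z: "cos (2*pi*q$3) = cos (2*pi*p$3)" "sin (2*pi*q$3) = sin (2*pi*p$3)"
    using cos_2pi_sign_shift[of 1 "p$3" k] sin_2pi_sign_shift[of 1 "p$3" k] by (simp_all add: q)
  have half_z: "cos (pi*q$3) = e * cos (pi*p$3)" "sin (pi*q$3) = e * sin (pi*p$3)"
    by (simp_all add: q e cos_pi_int_shift sin_pi_int_shift)
  show ?thesis
    using sign by (elim disjE) (auto simp: vec_eq_iff forall_5 x y z half_z)
qed

lemma bundle_emb_eq_same_height_imp:
  assumes eq: "bundle_emb p = bundle_emb q" and height: "p$3 = q$3"
  shows "\<exists>m n :: int. q$1 = p$1 + of_int m \<and> q$2 = p$2 + of_int n"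
proof -
  have comp: "bundle_emb p $ i = bundle_emb q $ i" for i using eq by simp
  have "cos (join_angle (p$2)) * cos (2*pi*q$3) = cos (join_angle (q$2)) * cos (2*pi*q$3)"
    "cos (join_angle (p$2)) * sin (2*pi*q$3) = cos (join_angle (q$2)) * sin (2*pi*q$3)"
    using comp[of 1] comp[of 2] by (simp_all add: height)
  then have "cos (join_angle (p$2)) = cos (join_angle (q$2))"
    using polar_eq_imp cos_join_angle_pos by blast
  then have "join_angle (p$2) = join_angle (q$2)"
    using join_angle_bounds[of "p$2"] join_angle_bounds[of "q$2"]
      cos_inj_pi[of "join_angle (p$2)" "join_angle (q$2)"] by fastforce
  then have cos_y: "cos (2*pi*p$2) = cos (2*pi*q$2)"
    and sin_join: "sin (join_angle (q$2)) = sin (join_angle (p$2))"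
    by (simp_all add: join_angle_def)
  have "cos (latitude (p$2)) * sin (2*pi*p$1) = cos (latitude (q$2)) * sin (2*pi*q$1) \<and>
      sin (latitude (p$2)) = sin (latitude (q$2))"
    using comp[of 4] comp[of 5] sin_join_angle_pos[of "p$2"]
    by (intro rotation_cancel[of "cos (pi*p$3)" "sin (pi*p$3)"]) (simp_all add: height sin_join)
  then have x: "cos (latitude (p$2)) * sin (2*pi*p$1) = cos (latitude (q$2)) * sin (2*pi*q$1)"
    and "latitude (p$2) = latitude (q$2)"
    using latitude_bounds[of "p$2"] latitude_bounds[of "q$2"] sin_inj_pi by (auto simp: less_imp_le)
  then have sin_y: "sin (2*pi*p$2) = sin (2*pi*q$2)"
    and cos_lat: "cos (latitude (q$2)) = cos (latitude (p$2))"
    by (simp_all add: latitude_def)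
  obtain n :: int where "q$2 = p$2 + of_int n"
    using cos_sin_2pi_eq_imp_int_shift[OF cos_y sin_y] by blast
  moreover have "cos (2*pi*p$1) = cos (2*pi*q$1)" "sin (2*pi*p$1) = sin (2*pi*q$1)"
    using comp[of 3] x sin_join_angle_pos[of "p$2"] cos_latitude_pos[of "p$2"]
    by (simp_all add: sin_join cos_lat)
  then obtain m :: int where "q$1 = p$1 + of_int m"
    using cos_sin_2pi_eq_imp_int_shift by blast
  ultimately show ?thesis by blast
qed

lemma bundle_emb_eq_imp_deck_equiv:
  assumes eq: "bundle_emb p = bundle_emb q"
  shows "deck_equiv p q"
proof -
  have "cos (join_angle (p$2)) * cos (2*pi*p$3) = cos (join_angle (q$2)) * cos (2*pi*q$3)"
    "cos (join_angle (p$2)) * sin (2*pi*p$3) = cos (join_angle (q$2)) * sin (2*pi*q$3)"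
    using arg_cong[OF eq, of "\<lambda>v. v $ 1"] arg_cong[OF eq, of "\<lambda>v. v $ 2"] by simp_all
  then have "cos (2*pi*p$3) = cos (2*pi*q$3)" "sin (2*pi*p$3) = sin (2*pi*q$3)"
    using polar_eq_imp cos_join_angle_pos by blast+
  then obtain k :: int where k: "q$3 = p$3 + of_int k"
    using cos_sin_2pi_eq_imp_int_shift by blast
  define e :: real where "e = (if even k then 1 else -1)"
  have sign: "e = 1 \<or> e = -1" by (simp add: e_def)
  \<comment> \<open>the deck translate of \<open>q\<close> at the height of \<open>p\<close>\<close>
  define q0 :: "real^3" where "q0 = vector [e * q$1, e * q$2, q$3 - of_int k]"
  have "deck_equiv q0 q"
    unfolding deck_equiv_def Let_def
    by (intro exI[of _ k] exI[of _ 0]) (simp add: q0_def e_def)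
  then have "bundle_emb p = bundle_emb q0" using eq bundle_emb_deck_invariant by simp
  moreover have "p$3 = q0$3" by (simp add: q0_def k)
  ultimately obtain m n :: int where "q0$1 = p$1 + of_int m" "q0$2 = p$2 + of_int n"
    using bundle_emb_eq_same_height_imp by blast
  then have "q$1 = e * p$1 + e * of_int m" "q$2 = e * p$2 + e * of_int n"
    using sign by (auto simp: q0_def)
  then show ?thesis
    unfolding deck_equiv_def Let_def
    by (intro exI[of _ k] exI[of _ "if even k then m else - m"] exI[of _ "if even k then n else - n"])
       (simp add: k e_def)
qed

definition bundle_emb_deriv :: "real^3 \<Rightarrow> real^3 \<Rightarrow> real^5" where
  "bundle_emb_deriv p v = (let
     \<beta> = join_angle (p$2); \<psi> = latitude (p$2); \<theta> = 2*pi*p$3; \<eta> = pi*p$3; \<tau> = 2*pi*p$1;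
     d\<beta> = - pi * sin (2*pi*p$2) * v$2; d\<psi> = pi * cos (2*pi*p$2) * v$2;
     a = - sin \<beta> * d\<beta>; b = cos \<beta> * (2*pi * v$3);
     X = cos \<beta> * d\<beta> * (cos \<psi> * sin \<tau>) + sin \<beta> * (- sin \<psi> * d\<psi> * sin \<tau> + cos \<psi> * cos \<tau> * (2*pi * v$1))
       - sin \<beta> * (pi * v$3) * sin \<psi>;
     Y = cos \<beta> * d\<beta> * sin \<psi> + sin \<beta> * (cos \<psi> * d\<psi>) + sin \<beta> * (pi * v$3) * (cos \<psi> * sin \<tau>)
   in \<chi> k.
     if k = 1 then cos \<theta> * a - sin \<theta> * b
     else if k = 2 then sin \<theta> * a + cos \<theta> * b
     else if k = 3 then cos \<beta> * d\<beta> * (cos \<psi> * cos \<tau>)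
       + sin \<beta> * (- sin \<psi> * d\<psi> * cos \<tau> - cos \<psi> * sin \<tau> * (2*pi * v$1))
     else if k = 4 then cos \<eta> * X - sin \<eta> * Y
     else sin \<eta> * X + cos \<eta> * Y)"

lemma bundle_emb_has_derivative: "(bundle_emb has_derivative bundle_emb_deriv p) (at p)"
proof (rule has_derivative_vecI)
  fix i :: 5
  show "((\<lambda>x. bundle_emb x $ i) has_derivative (\<lambda>v. bundle_emb_deriv p v $ i)) (at p)"
    using exhaust_5[of i]
    by (elim disjE; simp only: bundle_emb_nth; simp add: bundle_emb_deriv_def Let_def join_angle_def latitude_def)
       (auto intro!: derivative_eq_intros ext simp: algebra_simps)
qed

lemma bundle_emb_deriv_12_eq_0_imp:
  assumes "bundle_emb_deriv p v $ 1 = 0" "bundle_emb_deriv p v $ 2 = 0"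
  shows "v$3 = 0" "sin (2*pi*p$2) * v$2 = 0"
proof -
  define a b where "a = - sin (join_angle (p$2)) * (- pi * sin (2*pi*p$2) * v$2)"
    and "b = cos (join_angle (p$2)) * (2*pi * v$3)"
  have "cos (2*pi*p$3) * a - sin (2*pi*p$3) * b = cos (2*pi*p$3) * 0 - sin (2*pi*p$3) * 0"
    "sin (2*pi*p$3) * a + cos (2*pi*p$3) * b = sin (2*pi*p$3) * 0 + cos (2*pi*p$3) * 0"
    using assms by (simp_all add: bundle_emb_deriv_def Let_def a_def b_def)
  then have "a = 0 \<and> b = 0"
    by (intro rotation_cancel) simp_all
  then show "v$3 = 0" "sin (2*pi*p$2) * v$2 = 0"
    using sin_join_angle_pos[of "p$2"] cos_join_angle_pos[of "p$2"] by (auto simp: a_def b_def)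
qed

lemma bundle_emb_deriv_eq_0_imp:
  assumes "bundle_emb_deriv p v = 0"
  shows "v = 0"
proof -
  define \<beta> \<psi> \<eta> \<tau> where "\<beta> = join_angle (p$2)" and "\<psi> = latitude (p$2)"
    and "\<eta> = pi*p$3" and "\<tau> = 2*pi*p$1"
  define d\<beta> d\<psi> where "d\<beta> = - pi * sin (2*pi*p$2) * v$2" and "d\<psi> = pi * cos (2*pi*p$2) * v$2"
  define X where "X = cos \<beta> * d\<beta> * (cos \<psi> * sin \<tau>)
    + sin \<beta> * (- sin \<psi> * d\<psi> * sin \<tau> + cos \<psi> * cos \<tau> * (2*pi * v$1)) - sin \<beta> * (pi * v$3) * sin \<psi>"
  define Y where "Y = cos \<beta> * d\<beta> * sin \<psi> + sin \<beta> * (cos \<psi> * d\<psi>) + sin \<beta> * (pi * v$3) * (cos \<psi> * sin \<tau>)"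
  note defs = \<beta>_def \<psi>_def \<eta>_def \<tau>_def d\<beta>_def d\<psi>_def X_def Y_def
  have pos: "0 < sin \<beta>" "0 < cos \<beta>" "0 < cos \<psi>"
    by (simp_all add: \<beta>_def \<psi>_def sin_join_angle_pos cos_join_angle_pos cos_latitude_pos)
  have comp: "bundle_emb_deriv p v $ i = 0" for i
    using assms by simp
  have v3: "v$3 = 0" and sin_v2: "sin (2*pi*p$2) * v$2 = 0"
    using bundle_emb_deriv_12_eq_0_imp comp by blast+
  then have d\<beta>: "d\<beta> = 0"
    by (simp add: d\<beta>_def)
  have "cos \<eta> * X - sin \<eta> * Y = cos \<eta> * 0 - sin \<eta> * 0"
    "sin \<eta> * X + cos \<eta> * Y = sin \<eta> * 0 + cos \<eta> * 0"
    using comp[of 4] comp[of 5] by (simp_all add: bundle_emb_deriv_def Let_def defs)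
  then have "X = 0 \<and> Y = 0"
    by (intro rotation_cancel) simp_all
  then have X: "X = 0" and d\<psi>: "d\<psi> = 0"
    using pos by (auto simp: Y_def v3 d\<beta>)
  have "cos \<beta> * d\<beta> * (cos \<psi> * cos \<tau>)
      + sin \<beta> * (- sin \<psi> * d\<psi> * cos \<tau> - cos \<psi> * sin \<tau> * (2*pi * v$1)) = 0"
    using comp[of 3] by (simp add: bundle_emb_deriv_def Let_def defs)
  then have "sin \<tau> * v$1 = 0"
    using pos by (simp add: d\<beta> d\<psi>)
  moreover have "cos \<tau> * v$1 = 0"
    using X pos by (simp add: X_def v3 d\<beta> d\<psi>)
  ultimately have v1: "v$1 = 0"
    by (rule sin_cos_mult_zero)
  have "cos (2*pi*p$2) * v$2 = 0"
    using d\<psi> by (simp add: d\<psi>_def)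
  with sin_v2 have v2: "v$2 = 0"
    by (rule sin_cos_mult_zero)
  show ?thesis
    using v1 v2 v3 by (simp add: vec_eq_iff forall_3)
qed

lemma inj_frechet_derivative_bundle_emb: "inj (frechet_derivative bundle_emb (at p))"
proof -
  have "frechet_derivative bundle_emb (at p) = bundle_emb_deriv p"
    using bundle_emb_has_derivative by (metis frechet_derivative_at)
  moreover have "linear (bundle_emb_deriv p)"
    using bundle_emb_has_derivative has_derivative_linear by blast
  ultimately show ?thesis
    using bundle_emb_deriv_eq_0_imp by (simp add: linear_injective_0)
qed

theorem mainTheorem8:
  shows "\<exists>f :: real^3 \<Rightarrow> real^5. smooth_embeds_B_in_S4 f"
proof -
  have "bundle_emb p = bundle_emb q \<longleftrightarrow> deck_equiv p q" for p q
    using bundle_emb_eq_imp_deck_equiv bundle_emb_deck_invariant by metis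
  then have "smooth_embeds_B_in_S4 bundle_emb"
    unfolding smooth_embeds_B_in_S4_def
    using smooth_map_bundle_emb norm_bundle_emb inj_frechet_derivative_bundle_emb by simp
  then show ?thesis by blast
qed

end
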